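(* Let $G=C\ltimes Q$, where $C$ is an elementary abelian $2$-group and $Q$ is a finite abelian group of odd exponent $n'$. Then $$\{g^{2n'/d}\mid g\in G\}=\{g\in G\mid g^d=1\}$$ for every divisor $d$ of $2n'$ such that either $d=2$, or $d\mid n'$ and $\gcd(d,n'/d)=1$. *)

theory Defs
  imports "HOL-Algebra.Algebra"
begin

definition group_exponent :: "('a, 'b) monoid_scheme \<Rightarrow> nat" where
  "group_exponent G = (LEAST n. n > 0 \<and> (\<forall>x\<in>carrier G. x [^]\<^bsub>G\<^esub> n = \<one>\<^bsub>G\<^esub>))"

definition elementary_abelian_2_group :: "('a, 'b) monoid_scheme \<Rightarrow> bool" where
  "elementary_abelian_2_group G \<longleftrightarrow>
     comm_group G \<and> (\<forall>x\<in>carrier G. x [^]\<^bsub>G\<^esub> (2::nat) = \<one>\<^bsub>G\<^esub>)"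

definition internal_semidirect :: "('a, 'b) monoid_scheme \<Rightarrow> 'a set \<Rightarrow> 'a set \<Rightarrow> bool" where
  "internal_semidirect G C Q \<longleftrightarrow>
     subgroup C G \<and> Q \<lhd> G \<and> C \<inter> Q = {\<one>\<^bsub>G\<^esub>} \<and> C <#>\<^bsub>G\<^esub> Q = carrier G"

end

theory Submission
  imports Defs
begin

text \<open>Since \<open>G/Q \<cong> C\<close> has exponent 2, every square lies in \<open>Q\<close>, so \<open>g ^ (2 n') = 1\<close> for all
  \<open>g\<close>. In a group satisfying \<open>g ^ N = 1\<close>, if \<open>d\<close> divides \<open>N\<close> and is coprime to \<open>k = N / d\<close>,
  a Bezout relation \<open>a k = y d + 1\<close> writes every \<open>x\<close> with \<open>x ^ d = 1\<close> as \<open>(x ^ a) ^ k\<close>, while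
  conversely \<open>(g ^ k) ^ d = g ^ N = 1\<close>. For \<open>N = 2 n'\<close> with \<open>n'\<close> odd, both admissible kinds
  of \<open>d\<close> are coprime to \<open>N / d\<close>.\<close>

lemma coprime_double_div_if_odd:
  fixes d n :: nat
  assumes "odd n" and "d = 2 \<or> (d dvd n \<and> coprime d (n div d))"
  shows "coprime d (2 * n div d)"
proof (cases "d = 2")
  case True
  then show ?thesis using \<open>odd n\<close> by simp
next
  case False
  with assms have "d dvd n" and "coprime d (n div d)" by auto
  moreover from \<open>d dvd n\<close> \<open>odd n\<close> have "odd d" using dvd_trans by blast
  moreover from \<open>d dvd n\<close> have "2 * n div d = 2 * (n div d)" by (simp add: div_mult_swap)
  ultimately show ?thesis by simp
qed

lemma pow_group_exponent_eq_one:
  fixes H (structure)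
  assumes "group H" and "finite (carrier H)" and "x \<in> carrier H"
  shows "x [^]\<^bsub>H\<^esub> group_exponent H = \<one>\<^bsub>H\<^esub>"
proof -
  interpret group H by fact
  have "order H > 0 \<and> (\<forall>y\<in>carrier H. y [^] order H = \<one>)"
    using assms(2) one_closed pow_order_eq_1 by (auto simp: order_def card_gt_0_iff)
  then have "group_exponent H > 0 \<and> (\<forall>y\<in>carrier H. y [^] group_exponent H = \<one>)"
    unfolding group_exponent_def by (rule LeastI)
  with assms(3) show ?thesis by blast
qed

context group
begin

lemma nat_pow_image_eq_torsion:
  fixes N d :: nat
  assumes exp: "\<forall>g\<in>carrier G. g [^] N = \<one>" and "N > 0"
    and "d dvd N" and "coprime d (N div d)"
  shows "{g [^] (N div d) | g. g \<in> carrier G} = {g \<in> carrier G. g [^] d = \<one>}"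
proof (intro equalityI subsetI)
  fix x assume "x \<in> {g [^] (N div d) | g. g \<in> carrier G}"
  then obtain g where g: "g \<in> carrier G" and x: "x = g [^] (N div d)" by blast
  have "x [^] d = g [^] (N div d * d)" using g x by (simp add: nat_pow_pow)
  also have "\<dots> = \<one>" using \<open>d dvd N\<close> g exp by simp
  finally show "x \<in> {g \<in> carrier G. g [^] d = \<one>}" using g x by simp
next
  fix x assume "x \<in> {g \<in> carrier G. g [^] d = \<one>}"
  then have x: "x \<in> carrier G" and xd: "x [^] d = \<one>" by auto
  let ?k = "N div d"
  have "?k \<noteq> 0" using \<open>N > 0\<close> \<open>d dvd N\<close> by (auto elim: dvdE)
  then obtain a y where "?k * a = d * y + gcd ?k d" using bezout_nat by blast
  moreover have "gcd ?k d = 1" using \<open>coprime d ?k\<close> by (simp add: gcd.commute)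
  ultimately have bezout: "a * ?k = d * y + 1" by (simp add: mult.commute)
  have "(x [^] a) [^] ?k = (x [^] d) [^] y \<otimes> x"
    using x by (simp add: nat_pow_pow nat_pow_mult[symmetric] bezout)
  also have "\<dots> = x" using x xd by simp
  finally show "x \<in> {g [^] (N div d) | g. g \<in> carrier G}"
    using x by (auto intro!: exI[of _ "x [^] a"])
qed

lemma square_mem_normal_complement:
  assumes "Q \<lhd> G" and "C \<subseteq> carrier G" and "C <#> Q = carrier G"
    and C2: "\<forall>c\<in>C. c [^] (2::nat) = \<one>" and g: "g \<in> carrier G"
  shows "g [^] (2::nat) \<in> Q"
proof -
  interpret Q: normal Q G by fact
  obtain c q where c: "c \<in> C" and q: "q \<in> Q" and gcq: "g = c \<otimes> q"
    using g \<open>C <#> Q = carrier G\<close> unfolding set_mult_def by blast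
  have cG: "c \<in> carrier G" and qG: "q \<in> carrier G" using c q assms(2) Q.subset by auto
  have "c [^] (2::nat) = \<one>" using C2 c by blast
  then have "c \<otimes> c = \<one>" using cG by (simp add: numeral_2_eq_2)
  then have "inv c = c" by (rule inv_equality[OF _ cG cG])
  then have "g [^] (2::nat) = (c \<otimes> q \<otimes> inv c) \<otimes> q"
    using gcq cG qG by (simp add: numeral_2_eq_2 m_assoc)
  moreover have "c \<otimes> q \<otimes> inv c \<in> Q" using cG q by (rule Q.inv_op_closed2)
  ultimately show ?thesis using q by simp
qed

end

theorem mainTheorem10:
  fixes G :: "('a, 'b) monoid_scheme" and C Q :: "'a set" and n' :: nat
  assumes "group G"
    and "internal_semidirect G C Q"
    and "elementary_abelian_2_group (G\<lparr>carrier := C\<rparr>)"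
    and "finite Q"
    and "comm_group (G\<lparr>carrier := Q\<rparr>)"
    and "n' = group_exponent (G\<lparr>carrier := Q\<rparr>)"
    and "odd n'"
  shows "\<forall>d::nat. d dvd 2 * n' \<longrightarrow> (d = 2 \<or> (d dvd n' \<and> coprime d (n' div d))) \<longrightarrow>
           {g [^]\<^bsub>G\<^esub> (2 * n' div d) | g. g \<in> carrier G} =
           {g \<in> carrier G. g [^]\<^bsub>G\<^esub> d = \<one>\<^bsub>G\<^esub>}"
proof -
  interpret group G by fact
  have "subgroup C G" and "Q \<lhd> G" and CQ: "C <#>\<^bsub>G\<^esub> Q = carrier G"
    using assms(2) unfolding internal_semidirect_def by auto
  have C2: "\<forall>c\<in>C. c [^]\<^bsub>G\<^esub> (2::nat) = \<one>\<^bsub>G\<^esub>"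
    using assms(3) unfolding elementary_abelian_2_group_def by (simp add: nat_pow_consistent[symmetric])
  have Qexp: "\<forall>q\<in>Q. q [^]\<^bsub>G\<^esub> n' = \<one>\<^bsub>G\<^esub>"
    using pow_group_exponent_eq_one[OF comm_group.axioms(2)[OF assms(5)]] assms(4,6)
    by (simp add: nat_pow_consistent[symmetric])
  have "\<forall>g\<in>carrier G. g [^]\<^bsub>G\<^esub> (2 * n') = \<one>\<^bsub>G\<^esub>"
  proof
    fix g assume g: "g \<in> carrier G"
    then have "g [^]\<^bsub>G\<^esub> (2::nat) \<in> Q"
      using square_mem_normal_complement[OF \<open>Q \<lhd> G\<close> subgroup.subset[OF \<open>subgroup C G\<close>] CQ C2]
      by blast
    then show "g [^]\<^bsub>G\<^esub> (2 * n') = \<one>\<^bsub>G\<^esub>" using g Qexp by (simp add: nat_pow_pow[symmetric])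
  qed
  moreover have "2 * n' > 0" using \<open>odd n'\<close> by (cases n') auto
  ultimately show ?thesis
    using nat_pow_image_eq_torsion coprime_double_div_if_odd[OF \<open>odd n'\<close>] by blast
qed

end
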